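(* Let $d \geq 2$ and let $\varGamma$ be a lattice in $\mathbb{R}^d$. The map $\eta\colon \operatorname{SOS}(\varGamma)\to\mathbb{R}^\bullet/\mathbb{Q}^\bullet$, $R\mapsto[\alpha]$, where $\alpha$ is any element of $\operatorname{scal}_\varGamma(R)$ and $[\alpha]$ denotes its class in $\mathbb{R}^\bullet/\mathbb{Q}^\bullet$, is a group homomorphism with kernel $\operatorname{SOC}(\varGamma)$.
   Context: A lattice in $\mathbb{R}^d$ is a subgroup of the form $\mathbb{Z}b_1\oplus\cdots\oplus\mathbb{Z}b_d$ where $\{b_1,\dots,b_d\}$ is a basis of $\mathbb{R}^d$. Two lattices $\varGamma,\varGamma'$ are commensurate, written $\varGamma\sim\varGamma'$, if $\varGamma\cap\varGamma'$ has finite index both in $\varGamma$ and in $\varGamma'$. $\operatorname{SOC}(\varGamma)=\{R\in\operatorname{SO}(d):\varGamma\sim R\varGamma\}$ (coincidence rotations) and $\operatorname{SOS}(\varGamma)=\{R\in\operatorname{SO}(d):\varGamma\sim\alpha R\varGamma\text{ for some }\alpha>0\}$ (similarity rotations); both are subgroups of $\operatorname{SO}(d)$. For $R\in\operatorname{SO}(d)$, $\operatorname{scal}_\varGamma(R)=\{\alpha\in\mathbb{R}:\varGamma\sim\alpha R\varGamma\}$, which is nonempty for $R\in\operatorname{SOS}(\varGamma)$, and any two of its elements have rational ratio, so $\eta$ is well defined. $\mathbb{R}^\bullet$ and $\mathbb{Q}^\bullet$ denote the multiplicative groups of nonzero real and nonzero rational numbers. *)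

theory Defs
  imports "HOL-Analysis.Analysis" "HOL-Algebra.Algebra"
begin

definition is_lattice :: "(real^'n) set \<Rightarrow> bool" where
  "is_lattice \<Gamma> \<longleftrightarrow> (\<exists>B::real^'n^'n. invertible B \<and>
      \<Gamma> = {B *v (\<chi> i. of_int (z i)) | z :: 'n \<Rightarrow> int. True})"

definition finite_index :: "(real^'n) set \<Rightarrow> (real^'n) set \<Rightarrow> bool" where
  "finite_index H G \<longleftrightarrow> finite ((\<lambda>x. (\<lambda>h. x + h) ` H) ` G)"

definition commensurate :: "(real^'n) set \<Rightarrow> (real^'n) set \<Rightarrow> bool" where
  "commensurate \<Gamma> \<Gamma>' \<longleftrightarrow> finite_index (\<Gamma> \<inter> \<Gamma>') \<Gamma> \<and> finite_index (\<Gamma> \<inter> \<Gamma>') \<Gamma>'"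

definition SO :: "(real^'n^'n) set" where
  "SO = {R. orthogonal_matrix R \<and> det R = 1}"

definition scaled_rot :: "real \<Rightarrow> real^'n^'n \<Rightarrow> (real^'n) set \<Rightarrow> (real^'n) set" where
  "scaled_rot \<alpha> R \<Gamma> = (\<lambda>x. \<alpha> *\<^sub>R (R *v x)) ` \<Gamma>"

definition SOC :: "(real^'n) set \<Rightarrow> (real^'n^'n) set" where
  "SOC \<Gamma> = {R \<in> SO. commensurate \<Gamma> ((\<lambda>x. R *v x) ` \<Gamma>)}"

definition SOS :: "(real^'n) set \<Rightarrow> (real^'n^'n) set" where
  "SOS \<Gamma> = {R \<in> SO. \<exists>\<alpha>>0. commensurate \<Gamma> (scaled_rot \<alpha> R \<Gamma>)}"

definition scal :: "(real^'n) set \<Rightarrow> real^'n^'n \<Rightarrow> real set" where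
  "scal \<Gamma> R = {\<alpha>. commensurate \<Gamma> (scaled_rot \<alpha> R \<Gamma>)}"

definition SOS_group :: "(real^'n) set \<Rightarrow> (real^'n^'n) monoid" where
  "SOS_group \<Gamma> = \<lparr>carrier = SOS \<Gamma>, mult = (**), one = mat 1\<rparr>"

definition Rstar :: "real monoid" where
  "Rstar = \<lparr>carrier = {x. x \<noteq> 0}, mult = (*), one = 1\<rparr>"

definition Qstar :: "real set" where
  "Qstar = {of_rat q | q. q \<noteq> 0}"

definition eta :: "(real^'n) set \<Rightarrow> real^'n^'n \<Rightarrow> real set" where
  "eta \<Gamma> R = Qstar #>\<^bsub>Rstar\<^esub> (SOME \<alpha>. \<alpha> \<in> scal \<Gamma> R)"

end

theory Submission
  imports Defs
begin

text \<open>Commensurability is an equivalence relation on subgroups of \<open>\<real>\<^sup>d\<close> that is preserved by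
  injective linear maps. For a lattice \<open>\<Gamma> = B\<int>\<^sup>d\<close> and a nonzero rational \<open>q = a/b\<close>, both \<open>q\<Gamma>\<close>
  and \<open>\<Gamma>\<close> contain \<open>a\<Gamma>\<close> with finite index, so \<open>q\<Gamma> \<sim> \<Gamma>\<close>. Conversely \<open>\<Gamma> \<sim> c\<Gamma>\<close> forces
  \<open>c \<in> \<rat>\<^sup>\<bullet>\<close>: by the pigeonhole principle some multiple \<open>m Be\<^sub>i\<close> (\<open>m \<noteq> 0\<close>) lies in \<open>c\<Gamma>\<close>, and then
  \<open>m/c\<close> is an integer coordinate. Applied to the lattice \<open>\<beta>R\<Gamma>\<close>, this shows that any two elements
  \<open>\<alpha>, \<beta>\<close> of \<open>scal(R)\<close> have \<open>\<alpha>/\<beta> \<in> \<rat>\<^sup>\<bullet>\<close>, so \<open>\<eta>\<close> is well defined. Mapping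
  \<open>\<Gamma> \<sim> \<beta>S\<Gamma>\<close> by \<open>\<alpha>R\<close> gives \<open>\<Gamma> \<sim> \<alpha>R\<Gamma> \<sim> \<alpha>\<beta>RS\<Gamma>\<close>, so \<open>\<eta>\<close> is multiplicative, and
  \<open>[\<alpha>]\<close> is trivial iff \<open>1 \<in> scal(R)\<close>, i.e. iff \<open>R \<in> SOC(\<Gamma>)\<close>.\<close>

section \<open>Finite covers by translates and commensurability\<close>

definition add_subgroup :: "'a::ab_group_add set \<Rightarrow> bool" where
  "add_subgroup S \<longleftrightarrow> 0 \<in> S \<and> (\<forall>x\<in>S. \<forall>y\<in>S. x - y \<in> S)"

lemma add_subgroup_zero: "add_subgroup S \<Longrightarrow> 0 \<in> S"
  unfolding add_subgroup_def by blast

lemma add_subgroup_diff: "add_subgroup S \<Longrightarrow> x \<in> S \<Longrightarrow> y \<in> S \<Longrightarrow> x - y \<in> S"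
  unfolding add_subgroup_def by blast

lemma add_subgroup_add:
  assumes "add_subgroup S" "x \<in> S" "y \<in> S"
  shows "x + y \<in> S"
proof -
  have "0 - y \<in> S"
    using assms add_subgroup_zero add_subgroup_diff by blast
  then show ?thesis
    using add_subgroup_diff[OF assms(1,2), of "0 - y"] by simp
qed

lemma add_subgroup_Int: "add_subgroup A \<Longrightarrow> add_subgroup B \<Longrightarrow> add_subgroup (A \<inter> B)"
  unfolding add_subgroup_def by blast

lemma add_subgroup_of_nat_scaleR:
  fixes v :: "'a::real_vector"
  assumes "add_subgroup S" "v \<in> S"
  shows "of_nat n *\<^sub>R v \<in> S"
  by (induction n) (simp_all add: assms add_subgroup_zero add_subgroup_add scaleR_add_left)

lemma add_subgroup_translate_eq:
  assumes "add_subgroup H" "h \<in> H"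
  shows "(\<lambda>k. x + h + k) ` H = (\<lambda>k. x + k) ` H"
proof (intro subset_antisym image_subsetI)
  fix k assume "k \<in> H"
  show "x + h + k \<in> (\<lambda>k. x + k) ` H"
    by (rule image_eqI[of _ _ "h + k"]) (simp_all add: add.assoc add_subgroup_add assms \<open>k \<in> H\<close>)
  show "x + k \<in> (\<lambda>k. x + h + k) ` H"
    by (rule image_eqI[of _ _ "k - h"]) (simp_all add: add_subgroup_diff assms \<open>k \<in> H\<close>)
qed

definition finitely_covers :: "'a::ab_group_add set \<Rightarrow> 'a set \<Rightarrow> bool" where
  "finitely_covers H G \<longleftrightarrow> (\<exists>F. finite F \<and> G \<subseteq> F + H)"

lemma finitely_covers_trans:
  assumes "finitely_covers H K" "finitely_covers K G"
  shows "finitely_covers H G"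
proof -
  obtain F1 F2 where F: "finite F1" "K \<subseteq> F1 + H" "finite F2" "G \<subseteq> F2 + K"
    using assms unfolding finitely_covers_def by blast
  have "F2 + K \<subseteq> F2 + (F1 + H)"
    using F(2) by (rule set_plus_mono2[OF order_refl])
  then have "G \<subseteq> F2 + (F1 + H)"
    using F(4) by (rule order_trans[rotated])
  then show ?thesis
    unfolding finitely_covers_def add.assoc[symmetric] using F(1,3) finite_set_plus by blast
qed

lemma finitely_covers_mono:
  "finitely_covers H G \<Longrightarrow> H \<subseteq> H' \<Longrightarrow> G' \<subseteq> G \<Longrightarrow> finitely_covers H' G'"
  unfolding finitely_covers_def by (metis order_trans order_refl set_plus_mono2)

lemma finitely_covers_Int:
  assumes A: "add_subgroup A" and H: "add_subgroup H" and "finitely_covers H G"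
  shows "finitely_covers (A \<inter> H) (A \<inter> G)"
proof -
  obtain F where F: "finite F" "G \<subseteq> F + H"
    using assms(3) unfolding finitely_covers_def by blast
  define r where "r f = (SOME y. y \<in> A \<inter> G \<and> y - f \<in> H)" for f
  have "A \<inter> G \<subseteq> r ` F + (A \<inter> H)"
  proof
    fix x assume x: "x \<in> A \<inter> G"
    then have "x \<in> F + H"
      using F(2) by blast
    then obtain f h where fh: "f \<in> F" "h \<in> H" "x = f + h"
      by (metis set_plus_elim)
    then have "\<exists>y. y \<in> A \<inter> G \<and> y - f \<in> H"
      using x by (intro exI[of _ x]) simp
    then have r: "r f \<in> A \<inter> G" "r f - f \<in> H"
      unfolding r_def by (metis (mono_tags, lifting) someI_ex)+
    have "x - r f = h - (r f - f)"
      using fh(3) by simp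
    also have "\<dots> \<in> H"
      using add_subgroup_diff[OF H fh(2) r(2)] .
    finally have "x - r f \<in> A \<inter> H"
      using x r(1) add_subgroup_diff[OF A] by blast
    moreover have "x = r f + (x - r f)"
      by simp
    ultimately show "x \<in> r ` F + (A \<inter> H)"
      using fh(1) by (metis imageI set_plus_intro)
  qed
  then show ?thesis
    unfolding finitely_covers_def using F(1) by blast
qed

lemma finitely_covers_int_multiple:
  fixes v :: "'a::real_vector"
  assumes cover: "finitely_covers H G" and H: "add_subgroup H" and G: "add_subgroup G"
    and v: "v \<in> G"
  obtains m :: int where "m \<noteq> 0" "of_int m *\<^sub>R v \<in> H"
proof -
  obtain F where F: "finite F" "G \<subseteq> F + H"
    using cover unfolding finitely_covers_def by blast
  have "\<forall>n::nat. \<exists>f. f \<in> F \<and> of_nat n *\<^sub>R v - f \<in> H"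
  proof
    fix n :: nat
    have "of_nat n *\<^sub>R v \<in> F + H"
      using F(2) add_subgroup_of_nat_scaleR[OF G v] by blast
    then show "\<exists>f. f \<in> F \<and> of_nat n *\<^sub>R v - f \<in> H"
      by (metis set_plus_elim add_diff_cancel_left')
  qed
  then obtain g where g: "\<And>n. g n \<in> F" "\<And>n. of_nat n *\<^sub>R v - g n \<in> H"
    by metis
  \<comment> \<open>pigeonhole: infinitely many multiples, finitely many representatives\<close>
  have "\<not> inj g"
    using g(1) F(1) finite_imageD[of g UNIV] finite_subset[of "range g" F] by auto
  then obtain n n' where nn: "n \<noteq> n'" "g n = g n'"
    unfolding inj_def by blast
  have "(of_nat n *\<^sub>R v - g n) - (of_nat n' *\<^sub>R v - g n') \<in> H"
    using add_subgroup_diff[OF H g(2) g(2)] .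
  then have "of_int (int n - int n') *\<^sub>R v \<in> H"
    using nn(2) by (simp add: scaleR_diff_left)
  then show thesis
    using nn(1) that[of "int n - int n'"] by simp
qed

lemma finite_index_iff_finitely_covers:
  fixes H G :: "(real^'n) set"
  assumes H: "add_subgroup H"
  shows "finite_index H G \<longleftrightarrow> finitely_covers H G"
proof
  let ?coset = "\<lambda>x. (\<lambda>h. x + h) ` H"
  assume "finite_index H G"
  then have "finite (?coset ` G)"
    unfolding finite_index_def .
  from finite_subset_image[OF this order_refl]
  obtain F where F: "F \<subseteq> G" "finite F" "?coset ` G = ?coset ` F"
    by blast
  have "G \<subseteq> F + H"
  proof
    fix x assume "x \<in> G"
    then have "?coset x \<in> ?coset ` F"
      using F(3) by blast
    then obtain y where y: "y \<in> F" "?coset x = ?coset y"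
      by blast
    have "x \<in> ?coset x"
      using add_subgroup_zero[OF H] by force
    then obtain h where "h \<in> H" "x = y + h"
      using y(2) by blast
    then show "x \<in> F + H"
      using set_plus_intro[OF y(1)] by simp
  qed
  then show "finitely_covers H G"
    unfolding finitely_covers_def using F(2) by blast
next
  let ?coset = "\<lambda>x. (\<lambda>h. x + h) ` H"
  assume "finitely_covers H G"
  then obtain F where F: "finite F" "G \<subseteq> F + H"
    unfolding finitely_covers_def by blast
  have "?coset ` G \<subseteq> ?coset ` F"
  proof
    fix C assume "C \<in> ?coset ` G"
    then obtain x where x: "x \<in> G" "C = ?coset x"
      by blast
    then have "x \<in> F + H"
      using F(2) by blast
    then obtain f h where fh: "f \<in> F" "h \<in> H" "x = f + h"
      by (metis set_plus_elim)
    then have "C = ?coset f"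
      using x(2) add_subgroup_translate_eq[OF H fh(2), of f] by simp
    then show "C \<in> ?coset ` F"
      using fh(1) by blast
  qed
  then show "finite_index H G"
    unfolding finite_index_def using finite_subset finite_imageI[OF F(1)] by metis
qed

lemma commensurate_iff_finitely_covers:
  fixes A B :: "(real^'n) set"
  assumes "add_subgroup A" "add_subgroup B"
  shows "commensurate A B \<longleftrightarrow> finitely_covers (A \<inter> B) A \<and> finitely_covers (A \<inter> B) B"
  unfolding commensurate_def
  using finite_index_iff_finitely_covers[OF add_subgroup_Int[OF assms]] by blast

lemma commensurate_sym: "commensurate A B \<Longrightarrow> commensurate B A"
  unfolding commensurate_def by (simp add: Int_commute)

lemma finitely_covers_Int_of_commensurate:
  fixes A B C :: "(real^'n) set"
  assumes A: "add_subgroup A" and B: "add_subgroup B" and C: "add_subgroup C"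
    and AB: "commensurate A B" and BC: "commensurate B C"
  shows "finitely_covers (A \<inter> C) A"
proof -
  have "finitely_covers (B \<inter> C) B"
    using BC by (simp add: commensurate_iff_finitely_covers B C)
  then have "finitely_covers (A \<inter> (B \<inter> C)) (A \<inter> B)"
    by (rule finitely_covers_Int[OF A add_subgroup_Int[OF B C]])
  moreover have "finitely_covers (A \<inter> B) A"
    using AB by (simp add: commensurate_iff_finitely_covers A B)
  ultimately have "finitely_covers (A \<inter> (B \<inter> C)) A"
    by (rule finitely_covers_trans)
  then show ?thesis
    by (rule finitely_covers_mono) auto
qed

lemma commensurate_trans:
  fixes A B C :: "(real^'n) set"
  assumes "add_subgroup A" "add_subgroup B" "add_subgroup C"
    and "commensurate A B" "commensurate B C"
  shows "commensurate A C"
  using finitely_covers_Int_of_commensurate[OF assms]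
    finitely_covers_Int_of_commensurate[OF assms(3,2,1) assms(5,4)[THEN commensurate_sym]]
  by (simp add: commensurate_iff_finitely_covers assms(1,3) Int_commute)

lemma finite_index_linear_image:
  fixes f :: "real^'n \<Rightarrow> real^'n"
  assumes "linear f" "finite_index H G"
  shows "finite_index (f ` H) (f ` G)"
proof -
  have "(\<lambda>y. (\<lambda>h. y + h) ` f ` H) ` f ` G = (\<lambda>C. f ` C) ` (\<lambda>x. (\<lambda>h. x + h) ` H) ` G"
    by (auto simp: image_image linear_add[OF assms(1)])
  then show ?thesis
    using assms(2) unfolding finite_index_def by simp
qed

lemma commensurate_linear_image:
  fixes f :: "real^'n \<Rightarrow> real^'n"
  assumes "linear f" "inj f" "commensurate A B"
  shows "commensurate (f ` A) (f ` B)"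
  using assms(3) finite_index_linear_image[OF assms(1)]
  unfolding commensurate_def image_Int[OF assms(2), symmetric] by blast

section \<open>Lattices\<close>

definition int_vector :: "('n \<Rightarrow> int) \<Rightarrow> real^'n" where
  "int_vector z = (\<chi> i. of_int (z i))"

lemma int_vector_nth [simp]: "int_vector z $ i = of_int (z i)"
  unfolding int_vector_def by simp

lemma int_vector_diff: "int_vector z - int_vector w = int_vector (\<lambda>i. z i - w i)"
  by (simp add: vec_eq_iff)

lemma int_vector_zero: "int_vector (\<lambda>_. 0) = 0"
  by (simp add: vec_eq_iff)

lemma scaleR_int_vector: "of_int k *\<^sub>R int_vector z = int_vector (\<lambda>i. k * z i)"
  by (simp add: vec_eq_iff)

lemma axis_eq_int_vector: "axis i 1 = int_vector (\<lambda>j. if j = i then 1 else 0)"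
  by (simp add: vec_eq_iff axis_def)

definition lattice_of :: "real^'n^'n \<Rightarrow> (real^'n) set" where
  "lattice_of B = range (\<lambda>z. B *v int_vector z)"

lemma is_lattice_iff_lattice_of: "is_lattice \<Gamma> \<longleftrightarrow> (\<exists>B. invertible B \<and> \<Gamma> = lattice_of B)"
  unfolding is_lattice_def lattice_of_def int_vector_def by (simp add: full_SetCompr_eq)

lemma add_subgroup_lattice_of: "add_subgroup (lattice_of B)"
  unfolding add_subgroup_def lattice_of_def
proof (intro conjI ballI)
  show "0 \<in> range (\<lambda>z. B *v int_vector z)"
    using rangeI[of "\<lambda>z. B *v int_vector z" "\<lambda>_. 0"] by (simp add: int_vector_zero)
  fix x y assume "x \<in> range (\<lambda>z. B *v int_vector z)" "y \<in> range (\<lambda>z. B *v int_vector z)"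
  then obtain z w where "x = B *v int_vector z" "y = B *v int_vector w"
    by blast
  then have "x - y = B *v int_vector (\<lambda>i. z i - w i)"
    by (simp add: matrix_vector_mult_diff_distrib[symmetric] int_vector_diff)
  then show "x - y \<in> range (\<lambda>z. B *v int_vector z)"
    by simp
qed

lemma image_lattice_of: "(\<lambda>x. A *v x) ` lattice_of B = lattice_of (A ** B)"
  unfolding lattice_of_def image_image by (simp add: matrix_vector_mul_assoc)

lemma lattice_of_scaleR: "lattice_of (c *\<^sub>R B) = (\<lambda>x. c *\<^sub>R x) ` lattice_of B"
  unfolding lattice_of_def image_image by (simp add: scaleR_matrix_vector_assoc)

lemma scaled_rot_lattice_of: "scaled_rot \<alpha> R (lattice_of B) = lattice_of ((\<alpha> *\<^sub>R R) ** B)"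
  unfolding scaled_rot_def image_lattice_of[symmetric] by (simp add: scaleR_matrix_vector_assoc)

lemma lattice_of_scaleR_int_subset: "lattice_of (of_int k *\<^sub>R B) \<subseteq> lattice_of B"
proof
  fix x assume "x \<in> lattice_of (of_int k *\<^sub>R B)"
  then obtain z where "x = (of_int k *\<^sub>R B) *v int_vector z"
    unfolding lattice_of_def by blast
  then have "x = B *v int_vector (\<lambda>i. k * z i)"
    by (simp add: matrix_scaleR_vector_ac[symmetric] scaleR_int_vector)
  then show "x \<in> lattice_of B"
    unfolding lattice_of_def by simp
qed

lemma finitely_covers_lattice_of_scaleR_int:
  fixes B :: "real^'n^'n"
  assumes k: "k \<noteq> 0"
  shows "finitely_covers (lattice_of (of_int k *\<^sub>R B)) (lattice_of B)"
proof -
  define residues where "residues = {r :: 'n \<Rightarrow> int. \<forall>i. r i \<in> {-\<bar>k\<bar>..\<bar>k\<bar>}}"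
  have "finite residues"
    using finite_PiE[of "UNIV :: 'n set" "\<lambda>_. {-\<bar>k\<bar>..\<bar>k\<bar>}"]
    unfolding residues_def PiE_UNIV_domain Pi_def by simp
  have "lattice_of B \<subseteq> (\<lambda>r. B *v int_vector r) ` residues + lattice_of (of_int k *\<^sub>R B)"
  proof
    fix x assume "x \<in> lattice_of B"
    then obtain z where z: "x = B *v int_vector z"
      unfolding lattice_of_def by blast
    define r where "r i = z i mod k" for i
    have "z i mod k \<in> {-\<bar>k\<bar>..\<bar>k\<bar>}" for i
      using abs_mod_less[OF k, of "z i"] by (auto simp: abs_less_iff)
    then have "r \<in> residues"
      unfolding residues_def r_def by blast
    have "int_vector z = int_vector r + of_int k *\<^sub>R int_vector (\<lambda>i. z i div k)"
      unfolding scaleR_int_vector by (simp add: vec_eq_iff r_def flip: of_int_mult of_int_add)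
    then have "x = B *v int_vector r + (of_int k *\<^sub>R B) *v int_vector (\<lambda>i. z i div k)"
      by (simp add: z matrix_vector_right_distrib matrix_scaleR_vector_ac)
    moreover have "(of_int k *\<^sub>R B) *v int_vector (\<lambda>i. z i div k) \<in> lattice_of (of_int k *\<^sub>R B)"
      unfolding lattice_of_def by (rule rangeI)
    ultimately show "x \<in> (\<lambda>r. B *v int_vector r) ` residues + lattice_of (of_int k *\<^sub>R B)"
      using set_plus_intro[OF imageI[OF \<open>r \<in> residues\<close>]] by simp
  qed
  then show ?thesis
    unfolding finitely_covers_def using \<open>finite residues\<close> by blast
qed

lemma commensurate_lattice_of_scaleR_rat:
  assumes "q \<in> \<rat>" "q \<noteq> 0"
  shows "commensurate (lattice_of (q *\<^sub>R B)) (lattice_of B)"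
proof -
  obtain a b :: int where ab: "b > 0" "q = of_int a / of_int b"
    using Rats_cases'[OF assms(1)] by metis
  have "a \<noteq> 0" "b \<noteq> 0"
    using ab assms(2) by auto
  have aB: "of_int a *\<^sub>R B = of_int b *\<^sub>R (q *\<^sub>R B)"
    using ab by simp
  \<comment> \<open>the common sublattice \<open>a\<Gamma> = b(q\<Gamma>)\<close> has finite index in both\<close>
  have sub: "lattice_of (of_int a *\<^sub>R B) \<subseteq> lattice_of (q *\<^sub>R B) \<inter> lattice_of B"
    using lattice_of_scaleR_int_subset[of a B] lattice_of_scaleR_int_subset[of b "q *\<^sub>R B"]
    unfolding aB by blast
  have "finitely_covers (lattice_of (q *\<^sub>R B) \<inter> lattice_of B) (lattice_of B)"
    using finitely_covers_lattice_of_scaleR_int[OF \<open>a \<noteq> 0\<close>] sub order_refl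
    by (rule finitely_covers_mono)
  moreover have "finitely_covers (lattice_of (q *\<^sub>R B) \<inter> lattice_of B) (lattice_of (q *\<^sub>R B))"
    using finitely_covers_lattice_of_scaleR_int[OF \<open>b \<noteq> 0\<close>] sub[unfolded aB] order_refl
    by (rule finitely_covers_mono)
  ultimately show ?thesis
    by (simp add: commensurate_iff_finitely_covers add_subgroup_lattice_of)
qed

lemma column_mem_lattice_of: "B *v axis i 1 \<in> lattice_of B"
  unfolding lattice_of_def axis_eq_int_vector by (rule rangeI)

lemma scaleR_column_mem_lattice_of_imp_Ints:
  assumes B: "invertible B" and t: "t *\<^sub>R (B *v axis i 1) \<in> lattice_of B"
  shows "t \<in> \<int>"
proof -
  obtain z where "t *\<^sub>R (B *v axis i 1) = B *v int_vector z"
    using t unfolding lattice_of_def by blast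
  then have "B *v (t *\<^sub>R axis i 1) = B *v int_vector z"
    by (simp add: matrix_scaleR_vector_ac scaleR_matrix_vector_assoc)
  then have "t *\<^sub>R axis i 1 = int_vector z"
    using inj_matrix_vector_mult[OF B] by (rule injD[rotated])
  then have "(t *\<^sub>R axis i 1) $ i = int_vector z $ i"
    by simp
  then have "t = of_int (z i)"
    by simp
  then show ?thesis
    by simp
qed

lemma rational_scale_of_commensurate_lattice_of:
  fixes B :: "real^'n^'n"
  assumes B: "invertible B" and comm: "commensurate (lattice_of B) (lattice_of (c *\<^sub>R B))"
  shows "c \<in> \<rat> \<and> c \<noteq> 0"
proof -
  fix i :: 'n
  let ?v = "B *v axis i 1"
  have "finitely_covers (lattice_of B \<inter> lattice_of (c *\<^sub>R B)) (lattice_of B)"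
    using comm by (simp add: commensurate_iff_finitely_covers add_subgroup_lattice_of)
  then obtain m :: int where m: "m \<noteq> 0" "of_int m *\<^sub>R ?v \<in> lattice_of (c *\<^sub>R B)"
    by (rule finitely_covers_int_multiple)
      (auto simp: add_subgroup_Int add_subgroup_lattice_of column_mem_lattice_of)
  then obtain w where w: "w \<in> lattice_of B" "of_int m *\<^sub>R ?v = c *\<^sub>R w"
    unfolding lattice_of_scaleR by blast
  have "?v \<noteq> 0"
    using inj_matrix_vector_mult[OF B] by (metis axis_eq_0_iff injD matrix_vector_mult_0_right zero_neq_one)
  then have "c \<noteq> 0"
    using w(2) m(1) by auto
  have "(of_int m / c) *\<^sub>R ?v = inverse c *\<^sub>R (of_int m *\<^sub>R ?v)"
    by (simp add: divide_inverse_commute)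
  also have "\<dots> = w"
    using w(2) \<open>c \<noteq> 0\<close> by simp
  finally have "(of_int m / c) *\<^sub>R ?v = w" .
  then have "of_int m / c \<in> \<int>"
    using w(1) by (intro scaleR_column_mem_lattice_of_imp_Ints[OF B, of _ i]) simp
  then have "of_int m / c \<in> \<rat>"
    using Ints_subset_Rats by blast
  then have "of_int m / (of_int m / c) \<in> \<rat>"
    by (rule Rats_divide[OF Rats_of_int])
  moreover have "of_int m / (of_int m / c) = c"
    using m(1) \<open>c \<noteq> 0\<close> by simp
  ultimately show ?thesis
    using \<open>c \<noteq> 0\<close> by simp
qed

section \<open>Scaling factors\<close>

lemma scal_lattice_of:
  "\<alpha> \<in> scal (lattice_of B) R \<longleftrightarrow> commensurate (lattice_of B) (lattice_of ((\<alpha> *\<^sub>R R) ** B))"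
  unfolding scal_def scaled_rot_lattice_of by simp

lemma scal_quotient_rational:
  assumes \<Gamma>: "is_lattice \<Gamma>" and R: "invertible R"
    and \<alpha>: "\<alpha> \<in> scal \<Gamma> R" and \<beta>: "\<beta> \<in> scal \<Gamma> R"
  shows "\<beta> \<noteq> 0 \<and> \<alpha> / \<beta> \<in> \<rat>"
proof -
  obtain B where B: "invertible B" "\<Gamma> = lattice_of B"
    using \<Gamma> is_lattice_iff_lattice_of by blast
  have comm_\<alpha>: "commensurate (lattice_of B) (lattice_of ((\<alpha> *\<^sub>R R) ** B))"
    using \<alpha> unfolding B(2) scal_lattice_of .
  have comm_\<beta>: "commensurate (lattice_of B) (lattice_of ((\<beta> *\<^sub>R R) ** B))"
    using \<beta> unfolding B(2) scal_lattice_of .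
  have "\<beta> \<noteq> 0"
  proof
    assume "\<beta> = 0"
    then have "commensurate (lattice_of B) (lattice_of (0 *\<^sub>R B))"
      using comm_\<beta> by simp
    then show False
      using rational_scale_of_commensurate_lattice_of[OF B(1)] by blast
  qed
  define M where "M = (\<beta> *\<^sub>R R) ** B"
  have "invertible M"
    unfolding M_def using invertible_mult[OF scalar_invertible[OF \<open>\<beta> \<noteq> 0\<close> R] B(1)] .
  have "(\<alpha> *\<^sub>R R) ** B = (\<alpha> / \<beta>) *\<^sub>R M"
    unfolding M_def using \<open>\<beta> \<noteq> 0\<close> by (simp add: scalar_matrix_assoc)
  then have "commensurate (lattice_of M) (lattice_of ((\<alpha> / \<beta>) *\<^sub>R M))"
    using commensurate_trans[OF add_subgroup_lattice_of add_subgroup_lattice_of add_subgroup_lattice_of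
        comm_\<beta>[folded M_def, THEN commensurate_sym] comm_\<alpha>] by simp
  then show ?thesis
    using rational_scale_of_commensurate_lattice_of[OF \<open>invertible M\<close>] \<open>\<beta> \<noteq> 0\<close> by blast
qed

lemma rat_mult_mem_scal:
  assumes \<Gamma>: "is_lattice \<Gamma>" and q: "q \<in> \<rat>" "q \<noteq> 0" and \<alpha>: "\<alpha> \<in> scal \<Gamma> R"
  shows "q * \<alpha> \<in> scal \<Gamma> R"
proof -
  obtain B where B: "\<Gamma> = lattice_of B"
    using \<Gamma> is_lattice_iff_lattice_of by blast
  have "((q * \<alpha>) *\<^sub>R R) ** B = q *\<^sub>R ((\<alpha> *\<^sub>R R) ** B)"
    by (simp add: scalar_matrix_assoc)
  then have "commensurate (lattice_of ((\<alpha> *\<^sub>R R) ** B)) (lattice_of (((q * \<alpha>) *\<^sub>R R) ** B))"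
    using commensurate_lattice_of_scaleR_rat[OF q] commensurate_sym by metis
  then show ?thesis
    using \<alpha> commensurate_trans[OF add_subgroup_lattice_of add_subgroup_lattice_of add_subgroup_lattice_of]
    unfolding B scal_lattice_of by blast
qed

lemma mult_mem_scal:
  assumes \<Gamma>: "is_lattice \<Gamma>" and R: "invertible R"
    and \<alpha>: "\<alpha> \<in> scal \<Gamma> R" and \<beta>: "\<beta> \<in> scal \<Gamma> S"
  shows "\<alpha> * \<beta> \<in> scal \<Gamma> (R ** S)"
proof -
  obtain B where B: "\<Gamma> = lattice_of B"
    using \<Gamma> is_lattice_iff_lattice_of by blast
  have "\<alpha> \<noteq> 0"
    using scal_quotient_rational[OF \<Gamma> R \<alpha> \<alpha>] by blast
  let ?A = "\<alpha> *\<^sub>R R"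
  have "commensurate (lattice_of B) (lattice_of ((\<beta> *\<^sub>R S) ** B))"
    using \<beta> unfolding B scal_lattice_of .
  from commensurate_linear_image[OF matrix_vector_mul_linear
      inj_matrix_vector_mult[OF scalar_invertible[OF \<open>\<alpha> \<noteq> 0\<close> R]] this]
  have "commensurate (lattice_of (?A ** B)) (lattice_of (?A ** ((\<beta> *\<^sub>R S) ** B)))"
    unfolding image_lattice_of .
  moreover have "?A ** ((\<beta> *\<^sub>R S) ** B) = ((\<alpha> * \<beta>) *\<^sub>R (R ** S)) ** B"
    by (simp add: scalar_matrix_assoc[symmetric] matrix_scalar_ac matrix_mul_assoc)
  ultimately show ?thesis
    using \<alpha> commensurate_trans[OF add_subgroup_lattice_of add_subgroup_lattice_of add_subgroup_lattice_of]
    unfolding B scal_lattice_of by metis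
qed

lemma one_mem_scal_iff:
  assumes \<Gamma>: "is_lattice \<Gamma>" and R: "invertible R" and \<alpha>: "\<alpha> \<in> scal \<Gamma> R"
  shows "1 \<in> scal \<Gamma> R \<longleftrightarrow> \<alpha> \<in> \<rat>"
proof
  assume "1 \<in> scal \<Gamma> R"
  then show "\<alpha> \<in> \<rat>"
    using scal_quotient_rational[OF \<Gamma> R \<alpha> \<open>1 \<in> scal \<Gamma> R\<close>] by simp
next
  assume "\<alpha> \<in> \<rat>"
  moreover have "\<alpha> \<noteq> 0"
    using scal_quotient_rational[OF \<Gamma> R \<alpha> \<alpha>] by blast
  ultimately have "inverse \<alpha> * \<alpha> \<in> scal \<Gamma> R"
    by (intro rat_mult_mem_scal[OF \<Gamma> _ _ \<alpha>]) auto
  then show "1 \<in> scal \<Gamma> R"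
    using \<open>\<alpha> \<noteq> 0\<close> by simp
qed

lemma SOC_eq: "SOC \<Gamma> = {R \<in> SO. 1 \<in> scal \<Gamma> R}"
  unfolding SOC_def scal_def scaled_rot_def by simp

lemma SOC_subset_SOS: "SOC \<Gamma> \<subseteq> SOS \<Gamma>"
  unfolding SOC_def SOS_def scaled_rot_def by (auto intro!: exI[of _ 1])

lemma invertible_if_SO: "R \<in> SO \<Longrightarrow> invertible R"
  unfolding SO_def orthogonal_matrix_def invertible_def by blast

section \<open>The quotient \<open>\<real>\<^sup>\<bullet>/\<rat>\<^sup>\<bullet>\<close>\<close>

lemma Qstar_eq_Rats: "Qstar = \<rat> - {0}"
  unfolding Qstar_def Rats_def by auto

lemma comm_group_Rstar: "comm_group Rstar"
proof (rule comm_groupI)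
  fix x assume "x \<in> carrier Rstar"
  then show "\<exists>y\<in>carrier Rstar. y \<otimes>\<^bsub>Rstar\<^esub> x = \<one>\<^bsub>Rstar\<^esub>"
    by (intro bexI[of _ "inverse x"]) (auto simp: Rstar_def)
qed (auto simp: Rstar_def)

interpretation Rstar: comm_group Rstar
  by (rule comm_group_Rstar)

lemma Rstar_inv: "x \<noteq> 0 \<Longrightarrow> inv\<^bsub>Rstar\<^esub> x = inverse x"
  by (rule Rstar.inv_equality) (auto simp: Rstar_def)

lemma subgroup_Qstar: "subgroup Qstar Rstar"
proof (rule Rstar.subgroupI)
  show "Qstar \<subseteq> carrier Rstar" "Qstar \<noteq> {}"
    unfolding Qstar_eq_Rats Rstar_def using Rats_1 by auto
  fix a b assume "a \<in> Qstar" "b \<in> Qstar"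
  then show "inv\<^bsub>Rstar\<^esub> a \<in> Qstar" "a \<otimes>\<^bsub>Rstar\<^esub> b \<in> Qstar"
    unfolding Qstar_eq_Rats by (simp_all add: Rstar_inv) (simp add: Rstar_def)
qed

lemma normal_Qstar: "Qstar \<lhd> Rstar"
  using Rstar.subgroup_imp_normal[OF subgroup_Qstar] .

lemma Qstar_rcos_eq:
  assumes "a \<noteq> 0" "b \<noteq> 0" "a / b \<in> \<rat>"
  shows "Qstar #>\<^bsub>Rstar\<^esub> a = Qstar #>\<^bsub>Rstar\<^esub> b"
proof -
  have "a = (a / b) \<otimes>\<^bsub>Rstar\<^esub> b" "a / b \<in> Qstar"
    using assms by (simp_all add: Rstar_def Qstar_eq_Rats)
  then have "a \<in> Qstar #>\<^bsub>Rstar\<^esub> b"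
    unfolding r_coset_def by blast
  then show ?thesis
    using Rstar.repr_independence[OF _ _ subgroup_Qstar] assms(2) by (simp add: Rstar_def)
qed

lemma Qstar_rcos_eq_Qstar_iff:
  assumes "a \<noteq> 0"
  shows "Qstar #>\<^bsub>Rstar\<^esub> a = Qstar \<longleftrightarrow> a \<in> \<rat>"
proof -
  have "a \<in> carrier Rstar"
    using assms by (simp add: Rstar_def)
  then show ?thesis
    using Rstar.coset_join1[OF _ _ subgroup_Qstar] Rstar.coset_join2[OF _ subgroup_Qstar] assms
    unfolding Qstar_eq_Rats by blast
qed

lemma eta_eq_rcos:
  assumes \<Gamma>: "is_lattice \<Gamma>" and R: "invertible R" and \<alpha>: "\<alpha> \<in> scal \<Gamma> R"
  shows "eta \<Gamma> R = Qstar #>\<^bsub>Rstar\<^esub> \<alpha>"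
proof -
  let ?\<alpha>\<^sub>0 = "SOME \<alpha>. \<alpha> \<in> scal \<Gamma> R"
  have "?\<alpha>\<^sub>0 \<in> scal \<Gamma> R"
    using \<alpha> by (rule someI)
  then have "?\<alpha>\<^sub>0 \<noteq> 0 \<and> \<alpha> \<noteq> 0 \<and> ?\<alpha>\<^sub>0 / \<alpha> \<in> \<rat>"
    using scal_quotient_rational[OF \<Gamma> R] \<alpha> by blast
  then show ?thesis
    unfolding eta_def by (intro Qstar_rcos_eq) auto
qed

lemma SOS_obtain_scal:
  assumes "R \<in> SOS \<Gamma>"
  obtains \<alpha> where "invertible R" "\<alpha> \<in> scal \<Gamma> R" "\<alpha> \<noteq> 0"
  using assms invertible_if_SO unfolding SOS_def scal_def by fastforce

lemma eta_hom:
  assumes \<Gamma>: "is_lattice \<Gamma>"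
  shows "eta \<Gamma> \<in> hom (SOS_group \<Gamma>) (Rstar Mod Qstar)"
proof (rule homI)
  fix R assume "R \<in> carrier (SOS_group \<Gamma>)"
  then obtain \<alpha> where "invertible R" "\<alpha> \<in> scal \<Gamma> R" "\<alpha> \<noteq> 0"
    by (auto simp: SOS_group_def elim: SOS_obtain_scal)
  then show "eta \<Gamma> R \<in> carrier (Rstar Mod Qstar)"
    using eta_eq_rcos[OF \<Gamma>] Rstar.rcosetsI[OF subgroup.subset[OF subgroup_Qstar]]
    by (simp add: FactGroup_def Rstar_def)
next
  fix R S assume "R \<in> carrier (SOS_group \<Gamma>)" "S \<in> carrier (SOS_group \<Gamma>)"
  then obtain \<alpha> \<beta> where R: "invertible R" "\<alpha> \<in> scal \<Gamma> R" "\<alpha> \<noteq> 0"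
    and S: "invertible S" "\<beta> \<in> scal \<Gamma> S" "\<beta> \<noteq> 0"
    by (auto simp: SOS_group_def elim!: SOS_obtain_scal)
  have "eta \<Gamma> (R ** S) = Qstar #>\<^bsub>Rstar\<^esub> (\<alpha> * \<beta>)"
    using eta_eq_rcos[OF \<Gamma> invertible_mult[OF R(1) S(1)] mult_mem_scal[OF \<Gamma> R(1,2) S(2)]] .
  also have "\<dots> = (Qstar #>\<^bsub>Rstar\<^esub> \<alpha>) <#>\<^bsub>Rstar\<^esub> (Qstar #>\<^bsub>Rstar\<^esub> \<beta>)"
    using normal.rcos_sum[OF normal_Qstar] R(3) S(3) by (simp add: Rstar_def)
  finally show "eta \<Gamma> (R \<otimes>\<^bsub>SOS_group \<Gamma>\<^esub> S) = eta \<Gamma> R \<otimes>\<^bsub>Rstar Mod Qstar\<^esub> eta \<Gamma> S"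
    using eta_eq_rcos[OF \<Gamma>] R S by (simp add: SOS_group_def FactGroup_def)
qed

lemma kernel_eta:
  assumes \<Gamma>: "is_lattice \<Gamma>"
  shows "kernel (SOS_group \<Gamma>) (Rstar Mod Qstar) (eta \<Gamma>) = SOC \<Gamma>"
proof (rule Set.set_eqI)
  fix R
  show "R \<in> kernel (SOS_group \<Gamma>) (Rstar Mod Qstar) (eta \<Gamma>) \<longleftrightarrow> R \<in> SOC \<Gamma>"
  proof (cases "R \<in> SOS \<Gamma>")
    case True
    then obtain \<alpha> where "invertible R" "\<alpha> \<in> scal \<Gamma> R" "\<alpha> \<noteq> 0"
      by (rule SOS_obtain_scal)
    then show ?thesis
      using True eta_eq_rcos[OF \<Gamma>] Qstar_rcos_eq_Qstar_iff one_mem_scal_iff[OF \<Gamma>]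
      by (simp add: kernel_def SOS_group_def FactGroup_def SOC_eq SOS_def)
  next
    case False
    then show ?thesis
      using SOC_subset_SOS by (auto simp: kernel_def SOS_group_def)
  qed
qed

theorem mainTheorem2:
  fixes \<Gamma> :: "(real^'n) set"
  assumes "CARD('n) \<ge> 2"
    and "is_lattice \<Gamma>"
  shows "eta \<Gamma> \<in> hom (SOS_group \<Gamma>) (Rstar Mod Qstar)
    \<and> kernel (SOS_group \<Gamma>) (Rstar Mod Qstar) (eta \<Gamma>) = SOC \<Gamma>"
  using eta_hom[OF assms(2)] kernel_eta[OF assms(2)] by blast

end
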